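(* Let $M$ be a complete smooth Riemannian manifold of dimension $d$, $Z$ a $C^1$ vector field on $M$, fix $x\in M$, $u_0\in\pi^{-1}(x)$ and $T>0$, and let $u_t$, $\gamma_t$, $\mathrm{ric}_Z$, $D_tF$, $\tilde D_tF$ be as in the context. Assume that for constants $K_1\ge 0$, $K_2\neq 0$ with $K_1+K_2\ge 0$ one has, for all $u\in O(M)$, $$K_2\,\mathrm{Id}\le \mathrm{ric}_Z^s(u):=\tfrac12\big(\mathrm{ric}_Z(u)+\mathrm{ric}_Z(u)^*\big),\qquad |||\mathrm{ric}_Z(u)|||\le K_1 .$$ For $0<t\le T$ set $$\Lambda(t,T)=1+\frac{K_1}{K_2}\Big(1-e^{-\frac{K_2(T-t)}{2}}\Big)+\frac{K_1}{K_2}\Big(1-e^{-\frac{K_2t}{2}}\Big)+\Big(\frac{K_1}{K_2}\Big)^2\Big[\Big(1-e^{-\frac{K_2t}{2}}\Big)+\frac12\Big(e^{-\frac{K_2(T+t)}{2}}-e^{-\frac{K_2(T-t)}{2}}\Big)\Big].$$ Then for every cylindrical function $F$ on $W_x^T(M)$, $$\int_0^T|\tilde D_tF|^2\,dt\le\int_0^T\Lambda(t,T)\,|D_tF|^2\,dt$$ (almost surely).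
   Context: $\mathrm{Ric}_Z=\mathrm{Ric}+\nabla Z$ (as an endomorphism field of $TM$). $O(M)$ is the orthonormal frame bundle, $\pi:O(M)\to M$ the projection, $H_1,\dots,H_d$ the canonical horizontal vector fields and $H_Z$ the horizontal lift of $Z$. Let $w$ be a standard Brownian motion on $\mathbb R^d$ with filtration $\mathcal F_t$, and $u_t$ the solution of the Stratonovich SDE $du_t=\sum_{i=1}^dH_i(u_t)\circ dw^i_t-\tfrac12H_Z(u_t)\,dt$, $u_0$ given; $\gamma_t=\pi(u_t)$. $W_x^T(M)$ is the space of continuous paths $\gamma:[0,T]\to M$ with $\gamma(0)=x$, equipped with the law $\mu_{x,T}$ of $\gamma_\cdot$. The equivariant Ricci tensor is $\mathrm{ric}_Z(u)=u^{-1}\circ\mathrm{Ric}_Z(\pi(u))\circ u$ (a $d\times d$ matrix); $^*$ denotes transpose and $|||\cdot|||$ the operator norm. A cylindrical function is $F(\gamma)=f(\gamma(t_1),\dots,\gamma(t_N))$ with $0\le t_1<\dots<t_N\le T$ and $f\in C_b^1(M^N)$; its gradient is $D_\tau F=\sum_{j=1}^N u_{t_j}^{-1}(\partial_jf)(\gamma_{t_1},\dots,\gamma_{t_N})\mathbf 1_{\tau\le t_j}$, where $\partial_j$ is the gradient in the $j$-th variable. Let $Q_{t,s}$ ($t\ge s$) solve $\frac{d}{dt}Q_{t,s}=-\frac12\mathrm{ric}_Z(u_t)Q_{t,s}$, $Q_{s,s}=\mathrm{Id}$. The damped gradient is $\tilde D_\tau F=\sum_{j=1}^NQ_{t_j,\tau}^*\big(u_{t_j}^{-1}\partial_jf\big)\mathbf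 1_{\tau\le t_j}$. *)

theory Defs
  imports "HOL-Analysis.Analysis"
begin

text \<open>Along a fixed sample path,
  ric t stands for the d x d matrix ric_Z(u_t), Q t s for the damping matrix Q_{t,s},
  ts j (j < N) for the times t_1 < ... < t_N of a cylindrical function and
  vs j for the vectors u_{t_j}^{-1} (partial_j f)(gamma_{t_1},...,gamma_{t_N}) in R^d.\<close>

definition Lambda :: "real \<Rightarrow> real \<Rightarrow> real \<Rightarrow> real \<Rightarrow> real" where
  "Lambda K1 K2 t T =
     1 + (K1 / K2) * (1 - exp (- K2 * (T - t) / 2))
       + (K1 / K2) * (1 - exp (- K2 * t / 2))
       + (K1 / K2)^2 * ((1 - exp (- K2 * t / 2))
            + (1/2) * (exp (- K2 * (T + t) / 2) - exp (- K2 * (T - t) / 2)))"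

definition cyl_grad :: "nat \<Rightarrow> (nat \<Rightarrow> real) \<Rightarrow> (nat \<Rightarrow> real^'n) \<Rightarrow> real \<Rightarrow> real^'n" where
  "cyl_grad N ts vs \<tau> = (\<Sum>j<N. if \<tau> \<le> ts j then vs j else 0)"

definition damped_grad :: "(real \<Rightarrow> real \<Rightarrow> real^'n^'n) \<Rightarrow> nat \<Rightarrow> (nat \<Rightarrow> real)
     \<Rightarrow> (nat \<Rightarrow> real^'n) \<Rightarrow> real \<Rightarrow> real^'n" where
  "damped_grad Q N ts vs \<tau> =
     (\<Sum>j<N. if \<tau> \<le> ts j then transpose (Q (ts j) \<tau>) *v vs j else 0)"

end

theory Submission
  imports Defs
begin

(* Along a fixed path, E r = (sum over t_j >= tau of v_j Q_{min(t_j, r), tau}) (row vectors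
   v_j = u_{t_j}^{-1} partial_j f) moves from D_tau F at r = tau to the damped gradient at r = T.
   Away from the t_j its derivative is -(1/2) (D_r F) ric_Z(u_r) Q_{r,tau}.  The lower Ricci bound
   makes Q dissipative, |v Q_{r,tau}| <= exp (-K2 (r - tau) / 2) |v|, and the upper one gives
   |v ric_Z| <= K1 |v|, so
     |D~_tau F| <= |D_tau F| + (K1/2) int_tau^T exp (-K2 (r - tau) / 2) |D_r F| dr.
   Squaring with a weighted Cauchy-Schwarz inequality and exchanging the order of integration
   (an integration by parts against a primitive of the resulting weight) yields Lambda (t, T) as
   the coefficient of |D_t F|^2. *)

section \<open>Matrix estimates and decay of the damping matrix\<close>

lemma bounded_linear_matrix_vector_mult_left:
  "bounded_linear (\<lambda>A::real^'n^'m. A *v x)"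
  by (rule linear_conv_bounded_linear[THEN iffD1], rule linearI)
     (simp_all add: matrix_vector_mult_add_rdistrib scaleR_matrix_vector_assoc[symmetric])

lemma bounded_linear_vector_matrix_mult_right:
  "bounded_linear (\<lambda>A::real^'n^'m. x v* A)"
  by (rule linear_conv_bounded_linear[THEN iffD1], rule linearI)
     (simp_all add: vector_matrix_mult_def vec_eq_iff sum.distrib sum_distrib_left algebra_simps)

lemma vector_matrix_mult_sum:
  "finite A \<Longrightarrow> (\<Sum>j\<in>A. w j) v* (M::real^'n^'m) = (\<Sum>j\<in>A. w j v* M)"
  using linear_sum[OF matrix_vector_mul_linear, of "transpose M" w A] by simp

lemma inner_symmetric_part:
  fixes A :: "real^'n^'n"
  shows "x \<bullet> ((1/2) *\<^sub>R (A + transpose A) *v x) = x \<bullet> (A *v x)"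
  by (simp add: scaleR_matrix_vector_assoc[symmetric] matrix_vector_mult_add_rdistrib
      inner_add_right dot_lmul_matrix[symmetric] inner_commute[of x "x v* A"])

lemma norm_vector_matrix_mult_le:
  fixes A :: "real^'n^'m"
  assumes A: "\<And>x. norm (A *v x) \<le> c * norm x"
  shows "norm (y v* A) \<le> c * norm y"
proof -
  have "0 \<le> c"
    using order_trans[OF norm_ge_zero A[of "axis undefined 1"]] by simp
  define z where "z = y v* A"
  have "norm z ^ 2 = y \<bullet> (A *v z)"
    unfolding z_def by (simp add: dot_lmul_matrix power2_norm_eq_inner)
  also have "\<dots> \<le> norm y * norm (A *v z)" by (rule norm_cauchy_schwarz)
  also have "\<dots> \<le> norm y * (c * norm z)" by (simp add: A mult_left_mono)
  finally have "norm z * norm z \<le> (c * norm y) * norm z"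
    by (simp add: power2_eq_square mult_ac)
  then show ?thesis
    using \<open>0 \<le> c\<close> unfolding z_def[symmetric]
    by (cases "norm z = 0") auto
qed

lemma norm_vector_matrix_mult_le_onorm:
  fixes A :: "real^'n^'m"
  shows "norm (y v* A) \<le> onorm (\<lambda>x. A *v x) * norm y"
  by (rule norm_vector_matrix_mult_le, rule onorm[OF matrix_vector_mul_bounded_linear])

lemma norm_le_exp_of_dissipative:
  fixes y :: "real \<Rightarrow> 'a::real_inner"
  assumes "a \<le> b"
    and y_deriv: "\<And>s. s \<in> {a..b} \<Longrightarrow> (y has_vector_derivative y' s) (at s within {a..b})"
    and dissipative: "\<And>s. s \<in> {a..b} \<Longrightarrow> y s \<bullet> y' s \<le> - c * (y s \<bullet> y s)"
  shows "norm (y b) \<le> exp (- c * (b - a)) * norm (y a)"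
proof -
  define \<psi> where "\<psi> s = exp (2 * c * (s - a)) * (y s \<bullet> y s)" for s
  define \<psi>' where "\<psi>' s = exp (2 * c * (s - a)) * (2 * c * (y s \<bullet> y s) + 2 * (y s \<bullet> y' s))" for s
  have "(\<psi> has_derivative (\<lambda>h. h * \<psi>' s)) (at s within {a..b})" if "s \<in> {a..b}" for s
    using y_deriv[OF that] unfolding \<psi>_def \<psi>'_def has_vector_derivative_def
    by (auto intro!: derivative_eq_intros simp: algebra_simps inner_commute[of "y' s"])
  then obtain s where s: "s \<in> {a..b}" and mvt: "\<psi> b - \<psi> a = (b - a) * \<psi>' s"
    using mvt_very_simple[OF \<open>a \<le> b\<close>, of \<psi> "\<lambda>s h. h * \<psi>' s"] by auto
  have "\<psi>' s \<le> 0"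
    using dissipative[OF s] unfolding \<psi>'_def by (intro mult_nonneg_nonpos) auto
  with \<open>a \<le> b\<close> have "(b - a) * \<psi>' s \<le> 0" by (intro mult_nonneg_nonpos) auto
  with mvt have "\<psi> b \<le> \<psi> a" by simp
  then have "(exp (c * (b - a)) * norm (y b))\<^sup>2 \<le> (norm (y a))\<^sup>2"
    by (simp add: \<psi>_def power_mult_distrib power2_norm_eq_inner exp_double[symmetric] mult_ac)
  then have "exp (c * (b - a)) * norm (y b) \<le> norm (y a)"
    by (rule power2_le_imp_le) simp
  then have "exp (- c * (b - a)) * (exp (c * (b - a)) * norm (y b)) \<le> exp (- c * (b - a)) * norm (y a)"
    by (rule mult_left_mono) simp
  then show ?thesis
    by (simp add: mult.assoc[symmetric] exp_add[symmetric])
qed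

lemma norm_vector_damping_le:
  fixes ric :: "real \<Rightarrow> real^'n^'n" and Q :: "real \<Rightarrow> real \<Rightarrow> real^'n^'n"
  assumes lower: "\<And>t x. t \<in> {0..T} \<Longrightarrow>
         K2 * (x \<bullet> x) \<le> x \<bullet> ((1/2) *\<^sub>R (ric t + transpose (ric t)) *v x)"
    and Q_ode: "\<And>s t. 0 \<le> s \<Longrightarrow> s \<le> t \<Longrightarrow> t \<le> T \<Longrightarrow>
         ((\<lambda>r. Q r s) has_vector_derivative (- (1/2)) *\<^sub>R (ric t ** Q t s)) (at t within {s..T})"
    and Q_init: "\<And>s. 0 \<le> s \<Longrightarrow> s \<le> T \<Longrightarrow> Q s s = mat 1"
    and "0 \<le> \<tau>" "\<tau> \<le> r" "r \<le> T"
  shows "norm (v v* Q r \<tau>) \<le> exp (- K2 * (r - \<tau>) / 2) * norm v"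
proof (rule norm_vector_matrix_mult_le)
  fix x
  have "norm (Q r \<tau> *v x) \<le> exp (- (K2 / 2) * (r - \<tau>)) * norm (Q \<tau> \<tau> *v x)"
  proof (rule norm_le_exp_of_dissipative[where y' = "\<lambda>s. (- (1/2)) *\<^sub>R (ric s *v (Q s \<tau> *v x))"])
    fix s assume s: "s \<in> {\<tau>..r}"
    have "((\<lambda>s. Q s \<tau> *v x) has_vector_derivative ((- (1/2)) *\<^sub>R (ric s ** Q s \<tau>)) *v x)
        (at s within {\<tau>..T})"
      using bounded_linear.has_vector_derivative[OF bounded_linear_matrix_vector_mult_left Q_ode]
        s assms(4-6) by auto
    moreover have "((- (1/2)) *\<^sub>R (ric s ** Q s \<tau>)) *v x = (- (1/2)) *\<^sub>R (ric s *v (Q s \<tau> *v x))"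
      by (simp only: scaleR_matrix_vector_assoc matrix_vector_mul_assoc)
    ultimately show "((\<lambda>s. Q s \<tau> *v x) has_vector_derivative (- (1/2)) *\<^sub>R (ric s *v (Q s \<tau> *v x)))
        (at s within {\<tau>..r})"
      using has_vector_derivative_within_subset[of _ _ s "{\<tau>..T}" "{\<tau>..r}"] assms(6) by auto
    show "(Q s \<tau> *v x) \<bullet> ((- (1/2)) *\<^sub>R (ric s *v (Q s \<tau> *v x)))
        \<le> - (K2 / 2) * ((Q s \<tau> *v x) \<bullet> (Q s \<tau> *v x))"
      using lower[of s "Q s \<tau> *v x"] s assms(4-6) by (simp add: inner_symmetric_part)
  qed (use assms(5) in simp)
  then show "norm (Q r \<tau> *v x) \<le> exp (- K2 * (r - \<tau>) / 2) * norm x"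
    using Q_init assms(4-6) by simp
qed

section \<open>Integral inequalities\<close>

lemma integrable_bounded_measurable_mult_continuous:
  fixes h c :: "real \<Rightarrow> real"
  assumes h: "h \<in> borel_measurable borel" and h_bound: "\<And>x. \<bar>h x\<bar> \<le> B"
    and c: "continuous_on {a..b} c"
  shows "(\<lambda>x. h x * c x) integrable_on {a..b}"
proof -
  have "h \<in> borel_measurable (lebesgue_on {a..b})"
    using measurable_comp[OF id_borel_measurable_lebesgue_on h] by (simp add: comp_def)
  moreover have "bounded (h ` {a..b})"
    using h_bound unfolding bounded_iff by (metis image_iff real_norm_def)
  ultimately have "(\<lambda>x. h x * c x) absolutely_integrable_on {a..b}"
    by (intro absolutely_integrable_bounded_measurable_product_real
        absolutely_integrable_continuous_real[OF c]) auto
  then show ?thesis by (rule set_lebesgue_integral_eq_integral(1))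
qed

(* f need not be integrable: its integral is then 0 by convention.  Nothing is assumed about
   the dependence of Q t s on s, so the damped gradient need not be measurable. *)
lemma integral_le_integrable_majorant:
  fixes f g :: "real \<Rightarrow> real"
  assumes g: "g integrable_on S"
    and f_nonneg: "\<And>x. x \<in> S \<Longrightarrow> 0 \<le> f x" and f_le: "\<And>x. x \<in> S \<Longrightarrow> f x \<le> g x"
  shows "integral S f \<le> integral S g"
proof (cases "f integrable_on S")
  case True
  then show ?thesis using g f_le by (rule integral_le)
next
  case False
  then have "integral S f = 0" by (rule not_integrable_integral)
  moreover have "0 \<le> integral S g"
    using g f_nonneg f_le by (intro integral_nonneg) (auto intro: order_trans)
  ultimately show ?thesis by simp
qed

lemma square_le_of_quadratic_nonneg:
  fixes E I M :: real
  assumes nonneg: "\<And>c. 0 \<le> M - 2 * c * I + c\<^sup>2 * E" and "0 \<le> E"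
  shows "I\<^sup>2 \<le> E * M"
proof (cases "E = 0")
  case True
  have "I = 0"
  proof (rule ccontr)
    assume "I \<noteq> 0"
    then have "M - 2 * ((M + 1) / (2 * I)) * I = -1" by (simp add: field_simps)
    then show False using nonneg[of "(M + 1) / (2 * I)"] True by simp
  qed
  with True show ?thesis by simp
next
  case False
  with \<open>0 \<le> E\<close> have "0 < E" by simp
  have "M - 2 * (I / E) * I + (I / E)\<^sup>2 * E = M - I\<^sup>2 / E"
    using \<open>0 < E\<close> by (simp add: field_simps power2_eq_square)
  with nonneg[of "I / E"] have "I\<^sup>2 / E \<le> M" by simp
  with \<open>0 < E\<close> show ?thesis by (simp add: field_simps)
qed

lemma weighted_integral_Cauchy_Schwarz:
  fixes f w :: "real \<Rightarrow> real"
  assumes w_nonneg: "\<And>x. x \<in> S \<Longrightarrow> 0 \<le> w x"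
    and w: "w integrable_on S"
    and fw: "(\<lambda>x. f x * w x) integrable_on S"
    and f2w: "(\<lambda>x. (f x)\<^sup>2 * w x) integrable_on S"
  shows "(integral S (\<lambda>x. f x * w x))\<^sup>2 \<le> integral S w * integral S (\<lambda>x. (f x)\<^sup>2 * w x)"
proof (rule square_le_of_quadratic_nonneg)
  fix c
  have i2: "(\<lambda>x. 2 * c * (f x * w x)) integrable_on S" and i3: "(\<lambda>x. c\<^sup>2 * w x) integrable_on S"
    using fw w by (auto intro: integrable_on_mult_right)
  have "integral S (\<lambda>x. (f x)\<^sup>2 * w x - 2 * c * (f x * w x) + c\<^sup>2 * w x)
      = integral S (\<lambda>x. (f x)\<^sup>2 * w x) - 2 * c * integral S (\<lambda>x. f x * w x) + c\<^sup>2 * integral S w"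
    by (simp add: integral_add[OF integrable_diff[OF f2w i2] i3] integral_diff[OF f2w i2])
  moreover have "0 \<le> integral S (\<lambda>x. (f x)\<^sup>2 * w x - 2 * c * (f x * w x) + c\<^sup>2 * w x)"
  proof (rule integral_nonneg)
    show "(\<lambda>x. (f x)\<^sup>2 * w x - 2 * c * (f x * w x) + c\<^sup>2 * w x) integrable_on S"
      by (intro integrable_add integrable_diff f2w i2 i3)
    fix x assume "x \<in> S"
    have "(f x)\<^sup>2 * w x - 2 * c * (f x * w x) + c\<^sup>2 * w x = w x * (f x - c)\<^sup>2"
      by (simp add: power2_eq_square algebra_simps)
    with w_nonneg[OF \<open>x \<in> S\<close>] show "0 \<le> (f x)\<^sup>2 * w x - 2 * c * (f x * w x) + c\<^sup>2 * w x"
      by simp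
  qed
  ultimately show "0 \<le> integral S (\<lambda>x. (f x)\<^sup>2 * w x) - 2 * c * integral S (\<lambda>x. f x * w x)
      + c\<^sup>2 * integral S w"
    by simp
qed (rule integral_nonneg[OF w w_nonneg])

lemma power2_add_mult_le_of_Cauchy_Schwarz:
  fixes x I E M k :: real
  assumes CS: "I\<^sup>2 \<le> E * M" and "0 \<le> E" "0 \<le> M" "0 \<le> k"
  shows "(x + k * I)\<^sup>2 \<le> x\<^sup>2 * (1 + k * E) + k * (1 + k * E) * M"
proof -
  have AM_GM: "2 * x * I \<le> x\<^sup>2 * E + M"
  proof (cases "E = 0")
    case True
    with CS have "I = 0" by simp
    with True \<open>0 \<le> M\<close> show ?thesis by simp
  next
    case False
    with \<open>0 \<le> E\<close> have "0 < E" by simp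
    have "0 \<le> (x * E - I)\<^sup>2" by simp
    with CS have "(2 * x * I) * E \<le> (x\<^sup>2 * E + M) * E"
      by (simp add: power2_eq_square algebra_simps)
    with \<open>0 < E\<close> show ?thesis by simp
  qed
  have "(x + k * I)\<^sup>2 = x\<^sup>2 + k * (2 * x * I) + k\<^sup>2 * I\<^sup>2"
    by (simp add: power2_eq_square algebra_simps)
  also have "\<dots> \<le> x\<^sup>2 + k * (x\<^sup>2 * E + M) + k\<^sup>2 * (E * M)"
    using AM_GM CS \<open>0 \<le> k\<close> by (intro add_mono mult_left_mono) auto
  also have "\<dots> = x\<^sup>2 * (1 + k * E) + k * (1 + k * E) * M"
    by (simp add: power2_eq_square algebra_simps)
  finally show ?thesis .
qed

lemma has_real_derivative_tail_integral:
  fixes g :: "real \<Rightarrow> real"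
  assumes g: "g integrable_on {a..b}" and S: "finite S"
    and x: "x \<in> {a<..<b} - S" and g_cont: "isCont g x"
  shows "((\<lambda>u. integral {u..b} g) has_real_derivative - g x) (at x)"
proof -
  have "x \<in> {a..b} - S" using x by auto
  from integral_has_vector_derivative_continuous_at[OF g this S
      continuous_at_imp_continuous_at_within[OF g_cont]]
  have "((\<lambda>u. integral {a..u} g) has_vector_derivative g x) (at x within {a<..<b} - S)"
    by (rule has_vector_derivative_within_subset) auto
  moreover have "at x within {a<..<b} - S = at x"
    using x by (intro at_within_open open_Diff finite_imp_closed S) auto
  ultimately have head: "((\<lambda>u. integral {a..u} g) has_real_derivative g x) (at x)"
    by (simp add: has_real_derivative_iff_has_vector_derivative)
  have tail_as_diff: "((\<lambda>u. integral {a..b} g - integral {a..u} g) has_real_derivative - g x) (at x)"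
    using DERIV_diff[OF DERIV_const head] by (simp only: diff_0)
  have combine: "integral {a..b} g - integral {a..u} g = integral {u..b} g" if "u \<in> {a<..<b}" for u
  proof -
    have "integral {a..u} g + integral {u..b} g = integral {a..b} g"
      using that by (intro Henstock_Kurzweil_Integration.integral_combine[OF _ _ g]) auto
    then show ?thesis by linarith
  qed
  show ?thesis
    by (rule has_field_derivative_transform_within_open[OF tail_as_diff open_greaterThanLessThan])
       (use x combine in auto)
qed

lemma integral_mult_tail_integral:
  fixes g h H :: "real \<Rightarrow> real"
  assumes "a \<le> b" and g: "g integrable_on {a..b}" and S: "finite S"
    and g_cont: "\<And>x. x \<in> {a<..<b} - S \<Longrightarrow> isCont g x"
    and H_deriv: "\<And>s. (H has_real_derivative h s) (at s)" and H_start: "H a = 0"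
    and Hg: "(\<lambda>s. H s * g s) integrable_on {a..b}"
  shows "integral {a..b} (\<lambda>\<tau>. h \<tau> * integral {\<tau>..b} g) = integral {a..b} (\<lambda>s. H s * g s)"
proof (rule integral_unique, rule integration_by_parts_interior_strong[OF bounded_bilinear_mult S \<open>a \<le> b\<close>])
  show "continuous_on {a..b} H"
    using H_deriv by (intro continuous_at_imp_continuous_on) (auto intro: DERIV_isCont)
  show "continuous_on {a..b} (\<lambda>\<tau>. integral {\<tau>..b} g)"
    by (rule indefinite_integral_continuous_1'[OF g])
  show "(H has_vector_derivative h x) (at x)" for x
    using H_deriv by (simp add: has_real_derivative_iff_has_vector_derivative)
  show "((\<lambda>u. integral {u..b} g) has_vector_derivative - g x) (at x)" if "x \<in> {a<..<b} - S" for x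
    using has_real_derivative_tail_integral[OF g S that g_cont[OF that]]
    by (simp add: has_real_derivative_iff_has_vector_derivative)
  show "((\<lambda>x. H x * - g x) has_integral
      H b * integral {b..b} g - H a * integral {a..b} g - integral {a..b} (\<lambda>s. H s * g s)) {a..b}"
    using has_integral_neg[OF integrable_integral[OF Hg]] H_start by simp
qed

section \<open>The pathwise bound on the damped gradient\<close>

lemma norm_cyl_grad_borel_measurable: "(\<lambda>t. norm (cyl_grad N ts vs t)) \<in> borel_measurable borel"
  unfolding cyl_grad_def by measurable

lemma norm_cyl_grad_le: "norm (cyl_grad N ts vs t) \<le> (\<Sum>j<N. norm (vs j))"
  unfolding cyl_grad_def by (rule order_trans[OF norm_sum]) (auto intro!: sum_mono)

lemma isCont_cyl_grad:
  assumes "t \<notin> ts ` {..<N}"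
  shows "isCont (cyl_grad N ts vs) t"
proof -
  have "isCont (\<lambda>s. if s \<le> ts j then vs j else 0) t" if "j < N" for j
  proof -
    have "t < ts j \<or> ts j < t" using assms that by (auto simp: neq_iff)
    then have "\<forall>\<^sub>F s in nhds t. (if s \<le> ts j then vs j else 0) = (if t \<le> ts j then vs j else 0)"
    proof
      assume "t < ts j"
      then show ?thesis
        by (intro eventually_mono[OF eventually_nhds_in_open[of "{..<ts j}" t]]) auto
    next
      assume "ts j < t"
      then show ?thesis
        by (intro eventually_mono[OF eventually_nhds_in_open[of "{ts j<..}" t]]) auto
    qed
    then show ?thesis by (simp add: isCont_cong)
  qed
  then show ?thesis
    unfolding cyl_grad_def[abs_def] by (intro continuous_intros) auto
qed

lemma has_vector_derivative_stopped_damping: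
  fixes ric :: "real \<Rightarrow> real^'n^'n" and Q :: "real \<Rightarrow> real \<Rightarrow> real^'n^'n"
  assumes Q_ode: "\<And>s t. 0 \<le> s \<Longrightarrow> s \<le> t \<Longrightarrow> t \<le> T \<Longrightarrow>
         ((\<lambda>r. Q r s) has_vector_derivative (- (1/2)) *\<^sub>R (ric t ** Q t s)) (at t within {s..T})"
    and "0 \<le> \<tau>" and x: "x \<in> {\<tau><..<T}" "x \<noteq> t"
  shows "((\<lambda>r. v v* Q (min t r) \<tau>) has_vector_derivative
           (if x \<le> t then (- (1/2)) *\<^sub>R ((v v* ric x) v* Q x \<tau>) else 0)) (at x)"
proof (cases "x < t")
  case True
  have "((\<lambda>r. Q r \<tau>) has_vector_derivative (- (1/2)) *\<^sub>R (ric x ** Q x \<tau>)) (at x within {\<tau><..<T})"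
    by (rule has_vector_derivative_within_subset[OF Q_ode]) (use assms in auto)
  then have "((\<lambda>r. Q r \<tau>) has_vector_derivative (- (1/2)) *\<^sub>R (ric x ** Q x \<tau>)) (at x)"
    using at_within_open[of x "{\<tau><..<T}"] x by auto
  from bounded_linear.has_vector_derivative[OF bounded_linear_vector_matrix_mult_right this]
  have "((\<lambda>r. v v* Q r \<tau>) has_vector_derivative (- (1/2)) *\<^sub>R ((v v* ric x) v* Q x \<tau>)) (at x)"
    by (simp only: vector_scaleR_matrix_ac vector_matrix_mul_assoc)
  then have "((\<lambda>r. v v* Q (min t r) \<tau>) has_vector_derivative (- (1/2)) *\<^sub>R ((v v* ric x) v* Q x \<tau>)) (at x)"
    by (rule has_vector_derivative_transform_within_open[of _ _ _ "{\<tau><..<t}"]) (use True x in auto)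
  with True show ?thesis by simp
next
  case False
  with x have "t < x" by auto
  have "((\<lambda>r. v v* Q t \<tau>) has_vector_derivative 0) (at x)"
    by (rule has_vector_derivative_const)
  then have "((\<lambda>r. v v* Q (min t r) \<tau>) has_vector_derivative 0) (at x)"
    by (rule has_vector_derivative_transform_within_open[of _ _ _ "{t<..}"]) (use \<open>t < x\<close> in auto)
  with \<open>t < x\<close> show ?thesis by simp
qed

definition partially_damped_grad :: "(real \<Rightarrow> real \<Rightarrow> real^'n^'n) \<Rightarrow> nat \<Rightarrow> (nat \<Rightarrow> real)
     \<Rightarrow> (nat \<Rightarrow> real^'n) \<Rightarrow> real \<Rightarrow> real \<Rightarrow> real^'n" where
  "partially_damped_grad Q N ts vs \<tau> r =
     (\<Sum>j<N. if \<tau> \<le> ts j then vs j v* Q (min (ts j) r) \<tau> else 0)"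

lemma partially_damped_grad_start:
  "Q \<tau> \<tau> = mat 1 \<Longrightarrow> partially_damped_grad Q N ts vs \<tau> \<tau> = cyl_grad N ts vs \<tau>"
  unfolding partially_damped_grad_def cyl_grad_def by (intro sum.cong) (auto simp: min_def)

lemma partially_damped_grad_end:
  "(\<And>j. j < N \<Longrightarrow> ts j \<le> T) \<Longrightarrow> partially_damped_grad Q N ts vs \<tau> T = damped_grad Q N ts vs \<tau>"
  unfolding partially_damped_grad_def damped_grad_def by (intro sum.cong) (auto simp: min_def)

lemma continuous_on_partially_damped_grad:
  assumes Q_cont: "continuous_on {\<tau>..T} (\<lambda>r. Q r \<tau>)" and ts_le: "\<And>j. j < N \<Longrightarrow> ts j \<le> T"
  shows "continuous_on {\<tau>..T} (partially_damped_grad Q N ts vs \<tau>)"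
  unfolding partially_damped_grad_def[abs_def]
proof (intro continuous_on_sum)
  fix j assume "j \<in> {..<N}"
  show "continuous_on {\<tau>..T} (\<lambda>r. if \<tau> \<le> ts j then vs j v* Q (min (ts j) r) \<tau> else 0)"
  proof (cases "\<tau> \<le> ts j")
    case True
    with \<open>j \<in> {..<N}\<close> ts_le have "continuous_on {\<tau>..T} (\<lambda>r. Q (min (ts j) r) \<tau>)"
      by (intro continuous_on_compose2[OF Q_cont]) (auto intro!: continuous_intros)
    then have "continuous_on {\<tau>..T} (\<lambda>r. vs j v* Q (min (ts j) r) \<tau>)"
      by (rule continuous_on_compose2[OF linear_continuous_on[OF bounded_linear_vector_matrix_mult_right]])
         auto
    with True show ?thesis by simp
  qed simp
qed

lemma has_vector_derivative_partially_damped_grad: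
  fixes ric :: "real \<Rightarrow> real^'n^'n" and Q :: "real \<Rightarrow> real \<Rightarrow> real^'n^'n"
  assumes Q_ode: "\<And>s t. 0 \<le> s \<Longrightarrow> s \<le> t \<Longrightarrow> t \<le> T \<Longrightarrow>
         ((\<lambda>r. Q r s) has_vector_derivative (- (1/2)) *\<^sub>R (ric t ** Q t s)) (at t within {s..T})"
    and "0 \<le> \<tau>" and x: "x \<in> {\<tau><..<T} - ts ` {..<N}"
  shows "(partially_damped_grad Q N ts vs \<tau> has_vector_derivative
           (- (1/2)) *\<^sub>R ((cyl_grad N ts vs x v* ric x) v* Q x \<tau>)) (at x)"
proof -
  let ?M = "\<lambda>v. (- (1/2)) *\<^sub>R ((v v* ric x) v* Q x \<tau>)"
  have "(partially_damped_grad Q N ts vs \<tau> has_vector_derivative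
      (\<Sum>j<N. if x \<le> ts j then ?M (vs j) else 0)) (at x)"
    unfolding partially_damped_grad_def[abs_def]
  proof (intro has_vector_derivative_sum)
    fix j assume "j \<in> {..<N}"
    show "((\<lambda>r. if \<tau> \<le> ts j then vs j v* Q (min (ts j) r) \<tau> else 0) has_vector_derivative
        (if x \<le> ts j then ?M (vs j) else 0)) (at x)"
    proof (cases "\<tau> \<le> ts j")
      case True
      from x \<open>j \<in> {..<N}\<close> have "x \<in> {\<tau><..<T}" "x \<noteq> ts j" by auto
      from has_vector_derivative_stopped_damping[OF Q_ode \<open>0 \<le> \<tau>\<close> this]
      show ?thesis using True by simp
    next
      case False
      with x show ?thesis by (simp add: has_vector_derivative_const)
    qed
  qed
  moreover have "(\<Sum>j<N. if x \<le> ts j then ?M (vs j) else 0) = ?M (cyl_grad N ts vs x)"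
    unfolding cyl_grad_def
    by (simp add: vector_matrix_mult_sum scaleR_sum_right) (rule sum.cong; simp)
  ultimately show ?thesis by simp
qed

lemma norm_damped_grad_le:
  fixes ric :: "real \<Rightarrow> real^'n^'n" and Q :: "real \<Rightarrow> real \<Rightarrow> real^'n^'n"
  assumes Q_ode: "\<And>s t. 0 \<le> s \<Longrightarrow> s \<le> t \<Longrightarrow> t \<le> T \<Longrightarrow>
         ((\<lambda>r. Q r s) has_vector_derivative (- (1/2)) *\<^sub>R (ric t ** Q t s)) (at t within {s..T})"
    and Q_init: "Q \<tau> \<tau> = mat 1"
    and Q_decay: "\<And>r v. \<tau> \<le> r \<Longrightarrow> r \<le> T \<Longrightarrow> norm (v v* Q r \<tau>) \<le> exp (- K2 * (r - \<tau>) / 2) * norm v"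
    and ric_bound: "\<And>r v. r \<in> {\<tau>..T} \<Longrightarrow> norm (v v* ric r) \<le> K1 * norm v"
    and ts_le: "\<And>j. j < N \<Longrightarrow> ts j \<le> T"
    and \<tau>: "0 \<le> \<tau>" "\<tau> \<le> T"
  shows "norm (damped_grad Q N ts vs \<tau>) \<le> norm (cyl_grad N ts vs \<tau>)
     + integral {\<tau>..T} (\<lambda>r. K1/2 * exp (- K2 * (r - \<tau>) / 2) * norm (cyl_grad N ts vs r))"
proof -
  let ?E = "partially_damped_grad Q N ts vs \<tau>"
  define E' where "E' r = (- (1/2)) *\<^sub>R ((cyl_grad N ts vs r v* ric r) v* Q r \<tau>)" for r
  define g where "g r = K1/2 * exp (- K2 * (r - \<tau>) / 2) * norm (cyl_grad N ts vs r)" for r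
  have "continuous_on {\<tau>..T} (\<lambda>r. Q r \<tau>)"
    using \<tau> by (auto intro!: continuous_at_imp_continuous_on has_vector_derivative_continuous Q_ode
        simp: continuous_on_eq_continuous_within)
  then have E'_integral: "(E' has_integral ?E T - ?E \<tau>) {\<tau>..T}"
    unfolding E'_def using \<tau>
    by (intro fundamental_theorem_of_calculus_interior_strong[of "ts ` {..<N}"]
        has_vector_derivative_partially_damped_grad[OF Q_ode] continuous_on_partially_damped_grad ts_le) auto
  have "norm (E' r) \<le> g r" if r: "r \<in> {\<tau>..T}" for r
  proof -
    have "norm (E' r) \<le> (1/2) * (exp (- K2 * (r - \<tau>) / 2) * norm (cyl_grad N ts vs r v* ric r))"
      unfolding E'_def using Q_decay r by auto
    also have "\<dots> \<le> (1/2) * (exp (- K2 * (r - \<tau>) / 2) * (K1 * norm (cyl_grad N ts vs r)))"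
      using ric_bound[OF r] by (intro mult_left_mono) auto
    finally show ?thesis unfolding g_def by (simp add: mult_ac)
  qed
  moreover have "(\<lambda>r. norm (cyl_grad N ts vs r) * (K1/2 * exp (- K2 * (r - \<tau>) / 2))) integrable_on {\<tau>..T}"
    by (rule integrable_bounded_measurable_mult_continuous[OF norm_cyl_grad_borel_measurable])
       (auto intro: norm_cyl_grad_le intro!: continuous_intros)
  then have "g integrable_on {\<tau>..T}" unfolding g_def by (simp add: mult_ac)
  ultimately have "norm (?E T - ?E \<tau>) \<le> integral {\<tau>..T} g"
    using integral_norm_bound_integral[OF has_integral_integrable[OF E'_integral]]
      integral_unique[OF E'_integral] by metis
  then show ?thesis
    using norm_triangle_sub[of "?E T" "?E \<tau>"] ts_le Q_init unfolding g_def
    by (simp add: partially_damped_grad_start partially_damped_grad_end)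
qed

section \<open>The exponential kernel and the coefficient Lambda\<close>

definition kernel_mass :: "real \<Rightarrow> real \<Rightarrow> real \<Rightarrow> real" where
  "kernel_mass K2 T s = (2 / K2) * (1 - exp (- K2 * (T - s) / 2))"

definition kernel_weight :: "real \<Rightarrow> real \<Rightarrow> real \<Rightarrow> real \<Rightarrow> real" where
  "kernel_weight K1 K2 T s = K1/2 * (1 + K1/2 * kernel_mass K2 T s) * exp (K2 * s / 2)"

definition kernel_weight_primitive :: "real \<Rightarrow> real \<Rightarrow> real \<Rightarrow> real \<Rightarrow> real" where
  "kernel_weight_primitive K1 K2 T s =
     K1/2 * (2 / K2) * (exp (K2 * s / 2) - 1)
     + (K1/2)\<^sup>2 * (2 / K2) * ((2 / K2) * (exp (K2 * s / 2) - 1) - exp (- K2 * T / 2) * (exp (K2 * s) - 1) / K2)"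

lemma exp_kernel_split:
  fixes K2 r \<tau> :: real
  shows "exp (- K2 * (r - \<tau>) / 2) = exp (K2 * \<tau> / 2) * exp (- K2 * r / 2)"
  by (simp add: exp_add[symmetric] field_simps)

lemma has_integral_exp_kernel:
  assumes "K2 \<noteq> 0" "s \<le> T"
  shows "((\<lambda>r. exp (- K2 * (r - s) / 2)) has_integral kernel_mass K2 T s) {s..T}"
proof -
  have "((\<lambda>r. - (2 / K2) * exp (- K2 * (r - s) / 2)) has_real_derivative exp (- K2 * (r - s) / 2))
      (at r within {s..T})" for r
    using assms(1) by (auto intro!: derivative_eq_intros)
  then have "((\<lambda>r. exp (- K2 * (r - s) / 2)) has_integral
      - (2 / K2) * exp (- K2 * (T - s) / 2) - - (2 / K2) * exp (- K2 * (s - s) / 2)) {s..T}"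
    by (intro fundamental_theorem_of_calculus[OF assms(2)])
       (simp add: has_real_derivative_iff_has_vector_derivative[symmetric])
  then show ?thesis
    by (simp add: kernel_mass_def algebra_simps)
qed

lemma kernel_mass_nonneg: "K2 \<noteq> 0 \<Longrightarrow> s \<le> T \<Longrightarrow> 0 \<le> kernel_mass K2 T s"
  using has_integral_nonneg[OF has_integral_exp_kernel] by auto

lemma has_real_derivative_kernel_weight_primitive:
  assumes "K2 \<noteq> 0"
  shows "(kernel_weight_primitive K1 K2 T has_real_derivative kernel_weight K1 K2 T s) (at s)"
proof -
  let ?D = "K1/2 * (2 / K2) * (exp (K2 * s / 2) * (K2 / 2)) + (K1/2)\<^sup>2 * (2 / K2) *
        ((2 / K2) * (exp (K2 * s / 2) * (K2 / 2)) - exp (- K2 * T / 2) * (exp (K2 * s) * K2) / K2)"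
  have deriv: "(kernel_weight_primitive K1 K2 T has_real_derivative ?D) (at s)"
    unfolding kernel_weight_primitive_def[abs_def]
    by (auto intro!: derivative_eq_intros) (simp add: mult_ac)
  have "exp (K2 * s) = exp (K2 * s / 2) * exp (K2 * s / 2)"
    by (simp add: exp_add[symmetric])
  moreover have "exp (- K2 * (T - s) / 2) = exp (- K2 * T / 2) * exp (K2 * s / 2)"
    by (simp add: exp_add[symmetric] algebra_simps add_divide_distrib[symmetric])
  ultimately have "?D = kernel_weight K1 K2 T s"
    using assms by (simp add: kernel_weight_def kernel_mass_def field_simps power2_eq_square)
  with deriv show ?thesis by (simp only:)
qed

lemma Lambda_eq_kernel:
  assumes "K2 \<noteq> 0"
  shows "Lambda K1 K2 s T
    = 1 + K1/2 * kernel_mass K2 T s + kernel_weight_primitive K1 K2 T s * exp (- K2 * s / 2)"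
proof -
  define u w where "u = exp (K2 * s / 2)" and "w = exp (K2 * T / 2)"
  have "0 < u" "0 < w" by (auto simp: u_def w_def)
  have e1: "exp (- K2 * (T - s) / 2) = u / w"
  proof -
    have "exp (- K2 * (T - s) / 2) = exp (K2 * s / 2 - K2 * T / 2)"
      by (rule arg_cong[where f = exp]) (simp add: field_simps)
    then show ?thesis by (simp only: exp_diff u_def w_def)
  qed
  have e2: "exp (- K2 * s / 2) = 1 / u" "exp (- K2 * T / 2) = 1 / w"
    by (simp_all add: u_def w_def exp_minus')
  have e3: "exp (- K2 * (T + s) / 2) = 1 / (u * w)"
  proof -
    have "exp (- K2 * (T + s) / 2) = exp (- (K2 * s / 2 + K2 * T / 2))"
      by (rule arg_cong[where f = exp]) (simp add: field_simps)
    then show ?thesis by (simp only: exp_minus' exp_add u_def w_def)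
  qed
  have e4: "exp (K2 * s) = u\<^sup>2"
    using exp_double[of "K2 * s / 2"] by (simp add: u_def)
  show ?thesis
    unfolding Lambda_def kernel_mass_def kernel_weight_primitive_def e1 e2 e3 e4 u_def[symmetric]
    using assms \<open>0 < u\<close> \<open>0 < w\<close> by (simp add: field_simps power2_eq_square)
qed

locale bounded_piecewise_continuous =
  fixes f :: "real \<Rightarrow> real" and C :: real and S :: "real set"
  assumes nonneg: "\<And>x. 0 \<le> f x" and bounded: "\<And>x. f x \<le> C"
    and borel: "f \<in> borel_measurable borel"
    and finite_jumps: "finite S" and isCont: "\<And>x. x \<notin> S \<Longrightarrow> isCont f x"
begin

lemma integrable_mult_continuous:
  "continuous_on {a..b} c \<Longrightarrow> (\<lambda>x. f x * c x) integrable_on {a..b}"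
  using nonneg bounded
  by (intro integrable_bounded_measurable_mult_continuous[OF borel, of C]) auto

lemma integrable_square_mult_continuous:
  "continuous_on {a..b} c \<Longrightarrow> (\<lambda>x. (f x)\<^sup>2 * c x) integrable_on {a..b}"
  using nonneg bounded borel
  by (intro integrable_bounded_measurable_mult_continuous[of _ "C\<^sup>2"]) (auto intro: power_mono)

lemma tail_square_le:
  assumes "0 \<le> K1" "K2 \<noteq> 0" "\<tau> \<le> T"
  shows "(f \<tau> + integral {\<tau>..T} (\<lambda>r. K1/2 * exp (- K2 * (r - \<tau>) / 2) * f r))\<^sup>2
    \<le> (f \<tau>)\<^sup>2 * (1 + K1/2 * kernel_mass K2 T \<tau>)
       + kernel_weight K1 K2 T \<tau> * integral {\<tau>..T} (\<lambda>r. (f r)\<^sup>2 * exp (- K2 * r / 2))"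
proof -
  define w where "w r = exp (- K2 * (r - \<tau>) / 2)" for r
  have w_cont: "continuous_on {\<tau>..T} w" unfolding w_def by (intro continuous_intros) auto
  have w_integral: "(w has_integral kernel_mass K2 T \<tau>) {\<tau>..T}"
    unfolding w_def using has_integral_exp_kernel assms(2,3) .
  have E: "0 \<le> kernel_mass K2 T \<tau>" using kernel_mass_nonneg assms(2,3) .
  have M: "0 \<le> integral {\<tau>..T} (\<lambda>r. (f r)\<^sup>2 * w r)"
    by (intro integral_nonneg integrable_square_mult_continuous w_cont) (simp add: w_def)
  have CS: "(integral {\<tau>..T} (\<lambda>r. f r * w r))\<^sup>2
      \<le> kernel_mass K2 T \<tau> * integral {\<tau>..T} (\<lambda>r. (f r)\<^sup>2 * w r)"
    unfolding integral_unique[OF w_integral, symmetric]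
    by (rule weighted_integral_Cauchy_Schwarz[OF _ has_integral_integrable[OF w_integral]
          integrable_mult_continuous[OF w_cont] integrable_square_mult_continuous[OF w_cont]])
       (simp add: w_def)
  have inner: "integral {\<tau>..T} (\<lambda>r. K1/2 * exp (- K2 * (r - \<tau>) / 2) * f r)
      = K1/2 * integral {\<tau>..T} (\<lambda>r. f r * w r)"
    by (simp add: w_def mult_ac)
  have outer: "integral {\<tau>..T} (\<lambda>r. (f r)\<^sup>2 * w r)
      = exp (K2 * \<tau> / 2) * integral {\<tau>..T} (\<lambda>r. (f r)\<^sup>2 * exp (- K2 * r / 2))"
    unfolding w_def exp_kernel_split[of K2] by (subst integral_mult_right[symmetric]) (simp add: mult_ac)
  show ?thesis
    using power2_add_mult_le_of_Cauchy_Schwarz[OF CS E M, of "K1/2" "f \<tau>"] assms(1)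
    unfolding inner outer kernel_weight_def by (simp add: mult_ac)
qed

lemma integrable_tail_square:
  "(\<lambda>\<tau>. (f \<tau> + integral {\<tau>..T} (\<lambda>r. K1/2 * exp (- K2 * (r - \<tau>) / 2) * f r))\<^sup>2) integrable_on {a..T}"
proof -
  define \<Phi> where "\<Phi> \<tau> = integral {\<tau>..T} (\<lambda>r. f r * exp (- K2 * r / 2))" for \<tau>
  have \<Phi>_cont: "continuous_on {a..T} \<Phi>"
    unfolding \<Phi>_def
    by (intro indefinite_integral_continuous_1' integrable_mult_continuous continuous_intros) auto
  have inner: "integral {\<tau>..T} (\<lambda>r. K1/2 * exp (- K2 * (r - \<tau>) / 2) * f r)
      = K1/2 * exp (K2 * \<tau> / 2) * \<Phi> \<tau>" for \<tau>
    unfolding \<Phi>_def exp_kernel_split[of K2]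
    by (subst integral_mult_right[symmetric]) (simp add: mult_ac)
  have "(\<lambda>\<tau>. (f \<tau>)\<^sup>2 * 1 + f \<tau> * (K1 * exp (K2 * \<tau> / 2) * \<Phi> \<tau>)
      + (K1/2 * exp (K2 * \<tau> / 2) * \<Phi> \<tau>)\<^sup>2) integrable_on {a..T}"
    by (intro integrable_add integrable_square_mult_continuous integrable_mult_continuous
        integrable_continuous_interval continuous_intros \<Phi>_cont) auto
  then show ?thesis
    unfolding inner by (rule integrable_eq) (simp add: power2_eq_square algebra_simps)
qed

lemma integral_tail_square_le_kernel:
  assumes "0 \<le> K1" "K2 \<noteq> 0"
  shows "integral {0..T} (\<lambda>\<tau>. (f \<tau> + integral {\<tau>..T} (\<lambda>r. K1/2 * exp (- K2 * (r - \<tau>) / 2) * f r))\<^sup>2)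
    \<le> integral {0..T} (\<lambda>\<tau>. (f \<tau>)\<^sup>2 * (1 + K1/2 * kernel_mass K2 T \<tau>))
      + integral {0..T} (\<lambda>\<tau>. kernel_weight K1 K2 T \<tau> * integral {\<tau>..T} (\<lambda>r. (f r)\<^sup>2 * exp (- K2 * r / 2)))"
proof -
  have diag: "(\<lambda>\<tau>. (f \<tau>)\<^sup>2 * (1 + K1/2 * kernel_mass K2 T \<tau>)) integrable_on {0..T}"
    unfolding kernel_mass_def by (intro integrable_square_mult_continuous continuous_intros) auto
  have "continuous_on {0..T} (\<lambda>\<tau>. integral {\<tau>..T} (\<lambda>r. (f r)\<^sup>2 * exp (- K2 * r / 2)))"
    by (intro indefinite_integral_continuous_1' integrable_square_mult_continuous continuous_intros) auto
  then have off_diag: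
    "(\<lambda>\<tau>. kernel_weight K1 K2 T \<tau> * integral {\<tau>..T} (\<lambda>r. (f r)\<^sup>2 * exp (- K2 * r / 2))) integrable_on {0..T}"
    unfolding kernel_weight_def kernel_mass_def
    by (intro integrable_continuous_interval continuous_intros) auto
  show ?thesis
    unfolding integral_add[OF diag off_diag, symmetric]
    by (intro integral_le integrable_tail_square integrable_add diag off_diag tail_square_le assms) auto
qed

lemma integral_kernel_weight_mult_tail:
  assumes "0 \<le> T" "K2 \<noteq> 0"
  shows "integral {0..T} (\<lambda>\<tau>. kernel_weight K1 K2 T \<tau> * integral {\<tau>..T} (\<lambda>r. (f r)\<^sup>2 * exp (- K2 * r / 2)))
    = integral {0..T} (\<lambda>s. (f s)\<^sup>2 * (kernel_weight_primitive K1 K2 T s * exp (- K2 * s / 2)))"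
proof -
  have "integral {0..T} (\<lambda>\<tau>. kernel_weight K1 K2 T \<tau> * integral {\<tau>..T} (\<lambda>r. (f r)\<^sup>2 * exp (- K2 * r / 2)))
      = integral {0..T} (\<lambda>s. kernel_weight_primitive K1 K2 T s * ((f s)\<^sup>2 * exp (- K2 * s / 2)))"
  proof (rule integral_mult_tail_integral[OF assms(1) _ finite_jumps])
    show "(\<lambda>s. (f s)\<^sup>2 * exp (- K2 * s / 2)) integrable_on {0..T}"
      by (intro integrable_square_mult_continuous continuous_intros) auto
    show "isCont (\<lambda>s. (f s)\<^sup>2 * exp (- K2 * s / 2)) x" if "x \<in> {0<..<T} - S" for x
      using isCont[of x] that by (auto intro!: continuous_intros)
    show "(kernel_weight_primitive K1 K2 T has_real_derivative kernel_weight K1 K2 T s) (at s)" for s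
      by (rule has_real_derivative_kernel_weight_primitive[OF assms(2)])
    show "kernel_weight_primitive K1 K2 T 0 = 0"
      by (simp add: kernel_weight_primitive_def)
    have "(\<lambda>s. (f s)\<^sup>2 * (kernel_weight_primitive K1 K2 T s * exp (- K2 * s / 2))) integrable_on {0..T}"
      unfolding kernel_weight_primitive_def
      by (intro integrable_square_mult_continuous continuous_intros) (auto simp: assms(2))
    then show "(\<lambda>s. kernel_weight_primitive K1 K2 T s * ((f s)\<^sup>2 * exp (- K2 * s / 2))) integrable_on {0..T}"
      by (simp add: mult_ac)
  qed
  then show ?thesis by (simp add: mult_ac)
qed

lemma integral_tail_square_le_Lambda:
  assumes "0 \<le> T" "0 \<le> K1" "K2 \<noteq> 0"
  shows "integral {0..T} (\<lambda>\<tau>. (f \<tau> + integral {\<tau>..T} (\<lambda>r. K1/2 * exp (- K2 * (r - \<tau>) / 2) * f r))\<^sup>2)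
    \<le> integral {0..T} (\<lambda>\<tau>. Lambda K1 K2 \<tau> T * (f \<tau>)\<^sup>2)"
proof -
  have diag: "(\<lambda>\<tau>. (f \<tau>)\<^sup>2 * (1 + K1/2 * kernel_mass K2 T \<tau>)) integrable_on {0..T}"
    unfolding kernel_mass_def by (intro integrable_square_mult_continuous continuous_intros) auto
  have primitive: "(\<lambda>s. (f s)\<^sup>2 * (kernel_weight_primitive K1 K2 T s * exp (- K2 * s / 2))) integrable_on {0..T}"
    unfolding kernel_weight_primitive_def
    by (intro integrable_square_mult_continuous continuous_intros) (auto simp: assms(3))
  have "integral {0..T} (\<lambda>\<tau>. (f \<tau> + integral {\<tau>..T} (\<lambda>r. K1/2 * exp (- K2 * (r - \<tau>) / 2) * f r))\<^sup>2)
      \<le> integral {0..T} (\<lambda>\<tau>. (f \<tau>)\<^sup>2 * (1 + K1/2 * kernel_mass K2 T \<tau>))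
        + integral {0..T} (\<lambda>s. (f s)\<^sup>2 * (kernel_weight_primitive K1 K2 T s * exp (- K2 * s / 2)))"
    using integral_tail_square_le_kernel[OF assms(2,3), where T = T]
    unfolding integral_kernel_weight_mult_tail[OF assms(1,3)] .
  also have "\<dots> = integral {0..T} (\<lambda>\<tau>. Lambda K1 K2 \<tau> T * (f \<tau>)\<^sup>2)"
    unfolding integral_add[OF diag primitive, symmetric]
    by (rule integral_cong) (simp add: Lambda_eq_kernel[OF assms(3)] algebra_simps)
  finally show ?thesis .
qed

end

theorem theorem1:
  fixes ric :: "real \<Rightarrow> real^'n^'n"
    and Q :: "real \<Rightarrow> real \<Rightarrow> real^'n^'n"
    and K1 K2 T :: real
    and N :: nat and ts :: "nat \<Rightarrow> real" and vs :: "nat \<Rightarrow> real^'n"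
  assumes "T > 0"
    and "K1 \<ge> 0" and "K2 \<noteq> 0" and "K1 + K2 \<ge> 0"
    and ric_cont: "continuous_on {0..T} ric"
    and lower: "\<And>t x. t \<in> {0..T} \<Longrightarrow>
         K2 * (x \<bullet> x) \<le> x \<bullet> ((1/2) *\<^sub>R (ric t + transpose (ric t)) *v x)"
    and upper: "\<And>t. t \<in> {0..T} \<Longrightarrow> onorm (\<lambda>x. ric t *v x) \<le> K1"
    and Q_ode: "\<And>s t. 0 \<le> s \<Longrightarrow> s \<le> t \<Longrightarrow> t \<le> T \<Longrightarrow>
         ((\<lambda>r. Q r s) has_vector_derivative (- (1/2)) *\<^sub>R (ric t ** Q t s)) (at t within {s..T})"
    and Q_init: "\<And>s. 0 \<le> s \<Longrightarrow> s \<le> T \<Longrightarrow> Q s s = mat 1"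
    and ts_mono: "\<And>i j. i < j \<Longrightarrow> j < N \<Longrightarrow> ts i < ts j"
    and ts_range: "\<And>j. j < N \<Longrightarrow> 0 \<le> ts j \<and> ts j \<le> T"
  shows "integral {0..T} (\<lambda>t. (norm (damped_grad Q N ts vs t))\<^sup>2)
         \<le> integral {0..T} (\<lambda>t. Lambda K1 K2 t T * (norm (cyl_grad N ts vs t))\<^sup>2)"
proof -
  let ?f = "\<lambda>t. norm (cyl_grad N ts vs t)"
  interpret bounded_piecewise_continuous ?f "\<Sum>j<N. norm (vs j)" "ts ` {..<N}"
    by unfold_locales
       (auto intro: norm_cyl_grad_le norm_cyl_grad_borel_measurable isCont_norm isCont_cyl_grad)
  have ric_bound: "norm (v v* ric r) \<le> K1 * norm v" if "r \<in> {0..T}" for r v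
    using norm_vector_matrix_mult_le_onorm[of v "ric r"] mult_right_mono[OF upper[OF that] norm_ge_zero]
    by (rule order_trans)
  show ?thesis
  proof (rule order_trans[OF integral_le_integrable_majorant integral_tail_square_le_Lambda])
    fix \<tau> assume \<tau>: "\<tau> \<in> {0..T}"
    have "norm (damped_grad Q N ts vs \<tau>)
        \<le> ?f \<tau> + integral {\<tau>..T} (\<lambda>r. K1/2 * exp (- K2 * (r - \<tau>) / 2) * ?f r)"
    proof (rule norm_damped_grad_le[OF Q_ode])
      show "norm (v v* Q r \<tau>) \<le> exp (- K2 * (r - \<tau>) / 2) * norm v" if "\<tau> \<le> r" "r \<le> T" for r v
        using norm_vector_damping_le[OF lower Q_ode Q_init] \<tau> that by auto
      show "norm (v v* ric r) \<le> K1 * norm v" if "r \<in> {\<tau>..T}" for r v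
        using ric_bound \<tau> that by auto
    qed (use \<tau> Q_init ts_range in auto)
    then show "(norm (damped_grad Q N ts vs \<tau>))\<^sup>2
        \<le> (?f \<tau> + integral {\<tau>..T} (\<lambda>r. K1/2 * exp (- K2 * (r - \<tau>) / 2) * ?f r))\<^sup>2"
      by (rule power_mono) simp
  qed (use assms(1-3) integrable_tail_square in auto)
qed

end
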